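(* Let $R\subseteq S_n$ be a top-$k$ partial ranking, $\sigma\in R$ and $\tau\in S_n$. Then $d(\sigma,\tau)=d(\sigma,\Pi_R(\tau))+d(\Pi_R(\tau),\tau)$.
   Context: $S_n$ is the symmetric group on $[n]$; $\sigma\in S_n$ is identified with the full ranking $\sigma(1)\succ\cdots\succ\sigma(n)$. For distinct items $x,y$, $\{x,y\}$ is discordant for $\sigma,\tau$ if $(\sigma^{-1}(x)-\sigma^{-1}(y))(\tau^{-1}(x)-\tau^{-1}(y))<0$. The Kendall distance $d(\sigma,\tau)$ is the number of unordered discordant pairs. For $0\le k\le n$ and distinct $a_1,\dots,a_k\in[n]$, the top-$k$ partial ranking is the set $R=\{\sigma\in S_n:\sigma(i)=a_i,\ i\le k\}$. For $\tau\in S_n$, $\Pi_R(\tau)$ denotes the unique element of $R$ minimising $\rho\mapsto d(\rho,\tau)$ over $\rho\in R$ (this minimiser exists and is unique). *)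

theory Defs
  imports "HOL-Combinatorics.Permutations"
begin

text \<open>S_n: permutations of {1..n}. A permutation sigma is read as the ranking
  sigma(1) > ... > sigma(n); the position of item x is (inv sigma) x.\<close>

definition Sn :: "nat \<Rightarrow> (nat \<Rightarrow> nat) set" where
  "Sn n = {\<sigma>. \<sigma> permutes {1..n}}"

definition discordant :: "(nat \<Rightarrow> nat) \<Rightarrow> (nat \<Rightarrow> nat) \<Rightarrow> nat \<Rightarrow> nat \<Rightarrow> bool" where
  "discordant \<sigma> \<tau> x y \<longleftrightarrow>
     (int (inv \<sigma> x) - int (inv \<sigma> y)) * (int (inv \<tau> x) - int (inv \<tau> y)) < 0"

definition kendall :: "nat \<Rightarrow> (nat \<Rightarrow> nat) \<Rightarrow> (nat \<Rightarrow> nat) \<Rightarrow> nat" where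
  "kendall n \<sigma> \<tau> = card {(x, y). x \<in> {1..n} \<and> y \<in> {1..n} \<and> x < y \<and> discordant \<sigma> \<tau> x y}"

definition topk :: "nat \<Rightarrow> nat \<Rightarrow> (nat \<Rightarrow> nat) \<Rightarrow> (nat \<Rightarrow> nat) set" where
  "topk n k a = {\<sigma> \<in> Sn n. \<forall>i\<in>{1..k}. \<sigma> i = a i}"

definition proj :: "nat \<Rightarrow> (nat \<Rightarrow> nat) set \<Rightarrow> (nat \<Rightarrow> nat) \<Rightarrow> (nat \<Rightarrow> nat)" where
  "proj n R \<tau> = (THE \<rho>. \<rho> \<in> R \<and> (\<forall>\<rho>'\<in>R. kendall n \<rho> \<tau> \<le> kendall n \<rho>' \<tau>))"

end

theory Submission
  imports Defs
begin

text \<open>The projection \<open>\<rho>\<close> of \<open>\<tau>\<close> keeps the prescribed top \<open>k\<close> items and lists the remaining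
  ones in the order \<open>\<tau>\<close> gives them. For \<open>\<sigma>\<close> in the partial ranking, no pair of items is
  discordant both for \<open>(\<sigma>, \<rho>)\<close> and for \<open>(\<rho>, \<tau>)\<close>: a pair meeting the top block is
  ordered alike by \<open>\<sigma>\<close> and \<open>\<rho>\<close>, a pair outside it alike by \<open>\<rho>\<close> and \<open>\<tau>\<close>. Hence the
  discordant pairs of \<open>(\<sigma>, \<tau>)\<close> split disjointly and \<open>d(\<sigma>,\<tau>) = d(\<sigma>,\<rho>) + d(\<rho>,\<tau>)\<close> for every
  such \<open>\<sigma>\<close>. Taking \<open>\<sigma>\<close> to be any minimiser shows \<open>d(\<sigma>,\<rho>) = 0\<close>, so \<open>\<rho>\<close> is the unique
  minimiser, i.e. \<open>\<rho> = \<Pi>\<^sub>R(\<tau>)\<close>.\<close>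

lemma Sn_inv_neq: "\<sigma> \<in> Sn n \<Longrightarrow> x \<noteq> y \<Longrightarrow> inv \<sigma> x \<noteq> inv \<sigma> y"
  unfolding Sn_def by (metis mem_Collect_eq permutes_inverses(1))

lemma discordant_iff:
  assumes "\<sigma> \<in> Sn n" "\<rho> \<in> Sn n" "x \<noteq> y"
  shows "discordant \<sigma> \<rho> x y \<longleftrightarrow> (inv \<sigma> x < inv \<sigma> y \<longleftrightarrow> inv \<rho> y < inv \<rho> x)"
proof -
  have "inv \<sigma> x \<noteq> inv \<sigma> y" "inv \<rho> x \<noteq> inv \<rho> y"
    using assms by (simp_all add: Sn_inv_neq)
  then show ?thesis
    unfolding discordant_def by (auto simp: mult_less_0_iff)
qed

lemma discordant_commute: "discordant \<sigma> \<rho> x y \<longleftrightarrow> discordant \<sigma> \<rho> y x"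
  unfolding discordant_def by (smt (verit) mult_minus_left mult_minus_right)

lemma kendall_add:
  assumes "\<sigma> \<in> Sn n" "\<rho> \<in> Sn n" "\<tau> \<in> Sn n"
    and not_both: "\<And>x y. x \<in> {1..n} \<Longrightarrow> y \<in> {1..n} \<Longrightarrow> x \<noteq> y \<Longrightarrow>
                       \<not> (discordant \<sigma> \<rho> x y \<and> discordant \<rho> \<tau> x y)"
  shows "kendall n \<sigma> \<tau> = kendall n \<sigma> \<rho> + kendall n \<rho> \<tau>"
proof -
  define D where "D f g = {(x, y). x \<in> {1..n} \<and> y \<in> {1..n} \<and> x < y \<and> discordant f g x y}"
    for f g
  have split: "discordant \<sigma> \<tau> x y \<longleftrightarrow> discordant \<sigma> \<rho> x y \<or> discordant \<rho> \<tau> x y"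
    if "x \<in> {1..n}" "y \<in> {1..n}" "x \<noteq> y" for x y
    using not_both[OF that] that(3) assms(1-3) Sn_inv_neq[OF assms(1) that(3)]
      Sn_inv_neq[OF assms(2) that(3)] Sn_inv_neq[OF assms(3) that(3)]
    by (auto simp: discordant_iff)
  have "finite (D f g)" for f g
    by (rule finite_subset[of _ "{1..n} \<times> {1..n}"]) (auto simp: D_def)
  moreover have "D \<sigma> \<tau> = D \<sigma> \<rho> \<union> D \<rho> \<tau>" "D \<sigma> \<rho> \<inter> D \<rho> \<tau> = {}"
    unfolding D_def using split not_both by auto
  ultimately show ?thesis
    unfolding kendall_def D_def[symmetric] by (simp add: card_Un_disjoint)
qed

definition rank :: "('a \<Rightarrow> 'b::linorder) \<Rightarrow> 'a set \<Rightarrow> 'a \<Rightarrow> nat" where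
  "rank h B x = card {y \<in> B. h y \<le> h x}"

lemma rank_mono: "finite B \<Longrightarrow> h x \<le> h y \<Longrightarrow> rank h B x \<le> rank h B y"
  unfolding rank_def by (rule card_mono) auto

lemma rank_strict_mono:
  assumes "finite B" "y \<in> B" "h x < h y"
  shows "rank h B x < rank h B y"
proof -
  have "{z \<in> B. h z \<le> h x} \<subset> {z \<in> B. h z \<le> h y}"
    using assms by force
  then show ?thesis
    unfolding rank_def using assms(1) by (simp add: psubset_card_mono)
qed

lemma rank_in_range:
  assumes "finite B" "x \<in> B"
  shows "rank h B x \<in> {1..card B}"
proof -
  have "x \<in> {y \<in> B. h y \<le> h x}" using assms(2) by simp
  then show ?thesis
    unfolding rank_def using assms(1)
    by (auto simp: Suc_le_eq card_gt_0_iff intro: card_mono)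
qed

lemma bij_betw_rank:
  assumes "finite B" "inj_on h B"
  shows "bij_betw (rank h B) B {1..card B}"
proof -
  have "inj_on (rank h B) B"
  proof (rule inj_onI, rule ccontr)
    fix x y assume "x \<in> B" "y \<in> B" "rank h B x = rank h B y" "x \<noteq> y"
    moreover from this have "h x < h y \<or> h y < h x"
      using assms(2) by (meson inj_onD neq_iff)
    ultimately show False
      using rank_strict_mono[OF assms(1)] by (metis less_irrefl)
  qed
  moreover have "rank h B ` B \<subseteq> {1..card B}"
    using rank_in_range[OF assms(1)] by blast
  ultimately show ?thesis
    by (simp add: bij_betw_def card_subset_eq card_image)
qed

lemma rank_eq_self:
  assumes bij: "bij_betw g B {1..m}" and "x \<in> B"
  shows "rank g B x = g x"
proof -
  have "g x \<le> m" using assms bij_betwE by fastforce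
  have "g ` {y \<in> B. g y \<le> g x} = {z \<in> g ` B. z \<le> g x}"
    by blast
  also have "\<dots> = {1..g x}"
    using bij_betw_imp_surj_on[OF bij] \<open>g x \<le> m\<close> by auto
  finally have "card (g ` {y \<in> B. g y \<le> g x}) = g x" by simp
  moreover have "inj_on g {y \<in> B. g y \<le> g x}"
    using bij_betw_imp_inj_on[OF bij] by (rule inj_on_subset) blast
  ultimately show ?thesis
    unfolding rank_def by (simp add: card_image)
qed

lemma kendall_eq_0_imp_eq:
  assumes "\<sigma> \<in> Sn n" "\<rho> \<in> Sn n" "kendall n \<sigma> \<rho> = 0"
  shows "\<sigma> = \<rho>"
proof -
  have perm: "\<sigma> permutes {1..n}" "\<rho> permutes {1..n}"
    using assms(1,2) by (simp_all add: Sn_def)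
  have "finite {(x, y). x \<in> {1..n} \<and> y \<in> {1..n} \<and> x < y \<and> discordant \<sigma> \<rho> x y}"
    by (rule finite_subset[of _ "{1..n} \<times> {1..n}"]) auto
  then have "\<not> discordant \<sigma> \<rho> x y" if "x \<in> {1..n}" "y \<in> {1..n}" "x < y" for x y
    using assms(3) that unfolding kendall_def by auto
  then have not_discordant: "\<not> discordant \<sigma> \<rho> x y"
    if "x \<in> {1..n}" "y \<in> {1..n}" "x \<noteq> y" for x y
    using that discordant_commute by (metis neq_iff)
  then have same_order: "inv \<sigma> y \<le> inv \<sigma> x \<longleftrightarrow> inv \<rho> y \<le> inv \<rho> x"
    if "x \<in> {1..n}" "y \<in> {1..n}" for x y
  proof (cases "x = y")
    case False
    then have "inv \<sigma> x \<noteq> inv \<sigma> y" "inv \<rho> x \<noteq> inv \<rho> y"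
      using assms(1,2) by (simp_all add: Sn_inv_neq)
    moreover have "\<not> discordant \<sigma> \<rho> x y" using that False not_discordant by blast
    ultimately show ?thesis
      using assms(1,2) False by (auto simp: discordant_iff)
  qed simp
  have bij: "bij_betw (inv \<sigma>) {1..n} {1..n}" "bij_betw (inv \<rho>) {1..n} {1..n}"
    using perm by (simp_all add: permutes_imp_bij permutes_inv)
  have "inv \<sigma> x = inv \<rho> x" for x
  proof (cases "x \<in> {1..n}")
    case True
    then have "rank (inv \<sigma>) {1..n} x = rank (inv \<rho>) {1..n} x"
      unfolding rank_def using same_order[OF True] by (metis (no_types, lifting))
    then show ?thesis
      using rank_eq_self[OF bij(1) True] rank_eq_self[OF bij(2) True] by simp
  next
    case False
    then show ?thesis
      using permutes_not_in[OF permutes_inv[OF perm(1)]] permutes_not_in[OF permutes_inv[OF perm(2)]]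
      by simp
  qed
  then show ?thesis
    using perm by (metis permutes_inv_inv ext)
qed

lemma proj_eqI:
  assumes "R \<subseteq> Sn n" "\<rho> \<in> R" "\<tau> \<in> Sn n"
    and decomp: "\<And>\<sigma>. \<sigma> \<in> R \<Longrightarrow> kendall n \<sigma> \<tau> = kendall n \<sigma> \<rho> + kendall n \<rho> \<tau>"
  shows "proj n R \<tau> = \<rho>"
  unfolding proj_def
proof (rule the_equality)
  have "kendall n \<rho> \<tau> \<le> kendall n \<rho>' \<tau>" if "\<rho>' \<in> R" for \<rho>'
    using decomp[OF that] by linarith
  then show "\<rho> \<in> R \<and> (\<forall>\<rho>'\<in>R. kendall n \<rho> \<tau> \<le> kendall n \<rho>' \<tau>)"
    using assms(2) by blast
next
  fix \<rho>' assume min: "\<rho>' \<in> R \<and> (\<forall>\<rho>''\<in>R. kendall n \<rho>' \<tau> \<le> kendall n \<rho>'' \<tau>)"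
  then have "kendall n \<rho>' \<rho> = 0"
    using decomp[of \<rho>'] assms(2) by (metis add_le_same_cancel2 le_zero_eq)
  then show "\<rho>' = \<rho>"
    using min assms(1,2) kendall_eq_0_imp_eq by blast
qed

lemma topk_Sn: "\<sigma> \<in> topk n k a \<Longrightarrow> \<sigma> \<in> Sn n"
  by (simp add: topk_def)

lemma topk_inv_top: "\<sigma> \<in> topk n k a \<Longrightarrow> i \<in> {1..k} \<Longrightarrow> inv \<sigma> (a i) = i"
  unfolding topk_def Sn_def using permutes_inv_eq by fastforce

lemma topk_inv_rest:
  assumes "\<sigma> \<in> topk n k a" "x \<in> {1..n} - a ` {1..k}"
  shows "k < inv \<sigma> x"
proof (rule ccontr)
  have perm: "\<sigma> permutes {1..n}" using assms(1) by (simp add: topk_def Sn_def)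
  assume "\<not> k < inv \<sigma> x"
  moreover have "inv \<sigma> x \<in> {1..n}"
    using assms(2) permutes_in_image[OF permutes_inv[OF perm]] by simp
  ultimately have i: "inv \<sigma> x \<in> {1..k}" by simp
  then have "x = a (inv \<sigma> x)"
    using assms(1) permutes_inverses(1)[OF perm] unfolding topk_def by fastforce
  with i assms(2) show False by blast
qed

lemma topk_not_discordant_twice:
  assumes "\<sigma> \<in> topk n k a" "\<rho> \<in> topk n k a" "\<tau> \<in> Sn n"
    and rest_sorted: "\<forall>x \<in> {1..n} - a ` {1..k}. \<forall>y \<in> {1..n} - a ` {1..k}.
                        inv \<rho> x < inv \<rho> y \<longrightarrow> inv \<tau> x < inv \<tau> y"
    and xy: "x \<in> {1..n}" "y \<in> {1..n}" "x \<noteq> y"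
  shows "\<not> (discordant \<sigma> \<rho> x y \<and> discordant \<rho> \<tau> x y)"
proof -
  have Sn: "\<sigma> \<in> Sn n" "\<rho> \<in> Sn n" using assms(1,2) by (simp_all add: topk_Sn)
  have top: "inv \<sigma> z = i" "inv \<rho> z = i" if "i \<in> {1..k}" "z = a i" for z i
    using that assms(1,2) topk_inv_top by blast+
  have rest: "k < inv \<sigma> z" "k < inv \<rho> z" if "z \<in> {1..n}" "z \<notin> a ` {1..k}" for z
    using that assms(1,2) topk_inv_rest by blast+
  consider (top_top) i j where "i \<in> {1..k}" "j \<in> {1..k}" "x = a i" "y = a j"
    | (top_rest) i where "i \<in> {1..k}" "x = a i" "y \<notin> a ` {1..k}"
    | (rest_top) j where "j \<in> {1..k}" "y = a j" "x \<notin> a ` {1..k}"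
    | (rest_rest) "x \<notin> a ` {1..k}" "y \<notin> a ` {1..k}"
    by blast
  then show ?thesis
  proof cases
    case top_top
    then have "i \<noteq> j" using xy(3) by blast
    then show ?thesis
      using top_top top Sn xy(3) by (auto simp: discordant_iff)
  next
    case top_rest
    then show ?thesis
      using top[OF top_rest(1,2)] rest[OF xy(2) top_rest(3)] Sn xy(3)
      by (auto simp: discordant_iff)
  next
    case rest_top
    then show ?thesis
      using top[OF rest_top(1,2)] rest[OF xy(1) rest_top(3)] Sn xy(3)
      by (auto simp: discordant_iff)
  next
    case rest_rest
    then have "inv \<rho> x < inv \<rho> y \<longrightarrow> inv \<tau> x < inv \<tau> y"
      "inv \<rho> y < inv \<rho> x \<longrightarrow> inv \<tau> y < inv \<tau> x"
      using rest_sorted xy by blast+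
    moreover have "inv \<rho> x \<noteq> inv \<rho> y" "inv \<tau> x \<noteq> inv \<tau> y"
      using Sn(2) assms(3) xy(3) by (simp_all add: Sn_inv_neq)
    ultimately show ?thesis
      using Sn assms(3) xy(3) by (auto simp: discordant_iff)
  qed
qed

definition proj_inv :: "nat \<Rightarrow> nat \<Rightarrow> (nat \<Rightarrow> nat) \<Rightarrow> (nat \<Rightarrow> nat) \<Rightarrow> nat \<Rightarrow> nat" where
  "proj_inv n k a \<tau> x =
     (if x \<in> a ` {1..k} then inv_into {1..k} a x
      else if x \<in> {1..n} then k + rank (inv \<tau>) ({1..n} - a ` {1..k}) x
      else x)"

lemma proj_inv_permutes:
  assumes "k \<le> n" "inj_on a {1..k}" "a ` {1..k} \<subseteq> {1..n}" "\<tau> \<in> Sn n"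
  shows "proj_inv n k a \<tau> permutes {1..n}"
proof -
  define A where "A = a ` {1..k}"
  define B where "B = {1..n} - A"
  have "card B = n - k"
    using assms(2,3) by (simp add: A_def B_def card_Diff_subset card_image finite_subset)
  moreover have "inj_on (inv \<tau>) B"
    using Sn_inv_neq[OF assms(4)] by (meson inj_onI)
  ultimately have "bij_betw (rank (inv \<tau>) B) B {1..n - k}"
    using bij_betw_rank[of B "inv \<tau>"] by (simp add: B_def)
  moreover have "bij_betw ((+) k) {1..n - k} {k + 1..n}"
    using assms(1) by (simp add: bij_betw_def add.commute)
  ultimately have "bij_betw (\<lambda>x. k + rank (inv \<tau>) B x) B {k + 1..n}"
    using bij_betw_trans by (fastforce simp: comp_def)
  then have "bij_betw (proj_inv n k a \<tau>) B {k + 1..n}"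
    by (rule bij_betw_cong[THEN iffD1, rotated]) (simp add: proj_inv_def A_def B_def)
  moreover have "bij_betw (proj_inv n k a \<tau>) A {1..k}"
    unfolding A_def using bij_betw_inv_into[OF inj_on_imp_bij_betw[OF assms(2)]]
    by (rule bij_betw_cong[THEN iffD1, rotated]) (simp add: proj_inv_def A_def)
  ultimately have "bij_betw (proj_inv n k a \<tau>) (A \<union> B) ({1..k} \<union> {k + 1..n})"
    by (intro bij_betw_combine) auto
  moreover have "A \<union> B = {1..n}" "{1..k} \<union> {k + 1..n} = {1..n}"
    using assms(1,3) by (auto simp: A_def B_def)
  ultimately show ?thesis
    using assms(3) by (intro bij_imp_permutes) (auto simp: proj_inv_def)
qed

lemma inv_proj_inv_in_topk:
  assumes "k \<le> n" "inj_on a {1..k}" "a ` {1..k} \<subseteq> {1..n}" "\<tau> \<in> Sn n"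
  shows "inv (proj_inv n k a \<tau>) \<in> topk n k a"
proof -
  note perm = proj_inv_permutes[OF assms]
  have "proj_inv n k a \<tau> (a i) = i" if "i \<in> {1..k}" for i
    using that assms(2) by (simp add: proj_inv_def)
  then show ?thesis
    using perm by (simp add: topk_def Sn_def permutes_inv permutes_inv_eq)
qed

lemma proj_inv_rest_sorted:
  "\<forall>x \<in> {1..n} - a ` {1..k}. \<forall>y \<in> {1..n} - a ` {1..k}.
     proj_inv n k a \<tau> x < proj_inv n k a \<tau> y \<longrightarrow> inv \<tau> x < inv \<tau> y"
proof (intro ballI impI, rule ccontr)
  fix x y assume "x \<in> {1..n} - a ` {1..k}" "y \<in> {1..n} - a ` {1..k}"
    and "proj_inv n k a \<tau> x < proj_inv n k a \<tau> y" "\<not> inv \<tau> x < inv \<tau> y"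
  moreover from this have
    "rank (inv \<tau>) ({1..n} - a ` {1..k}) y \<le> rank (inv \<tau>) ({1..n} - a ` {1..k}) x"
    by (simp add: rank_mono)
  ultimately show False
    by (simp add: proj_inv_def)
qed

theorem lemma5:
  fixes n k :: nat and a \<sigma> \<tau> :: "nat \<Rightarrow> nat"
  assumes "k \<le> n"
    and "inj_on a {1..k}" and "a ` {1..k} \<subseteq> {1..n}"
    and "\<sigma> \<in> topk n k a"
    and "\<tau> \<in> Sn n"
  shows "kendall n \<sigma> \<tau> =
           kendall n \<sigma> (proj n (topk n k a) \<tau>) + kendall n (proj n (topk n k a) \<tau>) \<tau>"
proof -
  define \<rho> where "\<rho> = inv (proj_inv n k a \<tau>)"
  have \<rho>: "\<rho> \<in> topk n k a"
    unfolding \<rho>_def using inv_proj_inv_in_topk[OF assms(1-3,5)] .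
  have "inv \<rho> = proj_inv n k a \<tau>"
    unfolding \<rho>_def using proj_inv_permutes[OF assms(1-3,5)] by (rule permutes_inv_inv)
  then have rest_sorted: "\<forall>x \<in> {1..n} - a ` {1..k}. \<forall>y \<in> {1..n} - a ` {1..k}.
                            inv \<rho> x < inv \<rho> y \<longrightarrow> inv \<tau> x < inv \<tau> y"
    using proj_inv_rest_sorted by (simp only:)
  have decomp: "kendall n \<sigma>' \<tau> = kendall n \<sigma>' \<rho> + kendall n \<rho> \<tau>" if "\<sigma>' \<in> topk n k a" for \<sigma>'
    using topk_not_discordant_twice[OF that \<rho> assms(5) rest_sorted]
    by (intro kendall_add[OF topk_Sn[OF that] topk_Sn[OF \<rho>] assms(5)])
  have "proj n (topk n k a) \<tau> = \<rho>"
    using topk_Sn by (intro proj_eqI[OF _ \<rho> assms(5) decomp]) blast+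
  then show ?thesis
    using decomp[OF assms(4)] by simp
qed

end
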